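(* Let $X$ be an $n$-dimensional random vector in class $\mathcal{L}_n(K)$. Let $f:\mathbb{R}^n\to\mathbb{R}$ be a continuously differentiable convex function. Take any $a\in\mathbb{R}$ and $b>0$, and let $p:=\mathbb{P}(f(X)\ge a,\ |\nabla f(X)|\le b)$. Then for any $t\ge0$, \[ \mathbb{P}\bigl(f(X)\le a-Kb\sqrt{2\log(2/p)}-t\bigr)\le 2e^{-t^2/2b^2K^2}. \]
   Context: $\mathcal{L}(K)$ is the set of probability measures on $\mathbb{R}$ that are push-forwards of the standard Gaussian measure under a Lipschitz map with Lipschitz constant $\le K$. $\mathcal{L}_n(K)$ is the set of product measures on $\mathbb{R}^n$ all of whose marginals lie in $\mathcal{L}(K)$; a random vector is in class $\mathcal{L}_n(K)$ if its law is in $\mathcal{L}_n(K)$. $|\cdot|$ is the Euclidean norm. *)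

theory Defs
  imports "HOL-Probability.Probability"
begin

definition std_gaussian :: "real measure" where
  "std_gaussian = density lborel std_normal_density"

definition lip_gauss_class :: "real \<Rightarrow> real measure set" where
  "lip_gauss_class K = {distr std_gaussian borel g | g. K-lipschitz_on UNIV g}"

definition lip_gauss_class_n :: "real \<Rightarrow> (real^'n) measure set" where
  "lip_gauss_class_n K =
     {distr (PiM UNIV \<nu>) borel (\<lambda>x. vec_lambda x) | \<nu>. \<forall>i. \<nu> i \<in> lip_gauss_class K}"

end

theory Submission
  imports Defs
begin

text \<open>
  The law of \<open>X\<close> is the image of the standard Gaussian measure \<open>\<gamma>\<close> on \<open>\<real>\<^sup>n\<close> under a
  \<open>K\<close>-Lipschitz map, so it suffices to compare the Gaussian measures of the preimages of
  \<open>A = {f \<ge> a, |\<nabla>f| \<le> b}\<close> and \<open>B = {f \<le> a - K b s - t}\<close>, where \<open>s = \<surd>(2 log (2/p))\<close>.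
  By convexity \<open>f y \<ge> f x - b |y - x|\<close> for \<open>x \<in> A\<close>, hence \<open>A\<close> and \<open>B\<close> are at distance at least
  \<open>K (s + t/(K b))\<close> and their preimages at distance at least \<open>D = s + t/(K b)\<close>.
  The Prekopa-Leindler inequality for \<open>\<gamma>\<close> (proved on the line from the Brunn-Minkowski
  inequality and tensorized coordinate by coordinate) gives
  \<open>\<gamma>(A')\<^sup>\<theta> \<gamma>(B')\<^bsup>1-\<theta>\<^esup> \<le> exp (- \<theta> (1 - \<theta>) D\<^sup>2 / 2)\<close> for sets at distance \<open>D\<close>;
  the choice \<open>\<theta> = (t/(K b)) / D\<close> turns this into the stated tail bound.
\<close>

section \<open>Brunn-Minkowski inequality on the line\<close>

lemma emeasure_lborel_affine_image:
  fixes c d :: real and S :: "real set"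
  assumes "compact S" "0 < c"
  shows "emeasure lborel ((\<lambda>x. c * x + d) ` S) = ennreal c * emeasure lborel S"
proof -
  have "compact ((\<lambda>x. c * x + d) ` S)"
    using assms by (intro compact_continuous_image continuous_intros)
  then show ?thesis
    using emeasure_lebesgue_affine[of c d S] assms by (simp add: borel_compact)
qed

text \<open>Shift \<open>\<theta> P\<close> and \<open>(1 - \<theta>) Q\<close> so that the maximum of the first meets the minimum of
  the second: both copies lie in \<open>C\<close> and overlap in a single point.\<close>

lemma brunn_minkowski_real_compact:
  fixes P Q C :: "real set" and \<theta> :: real
  assumes \<theta>: "0 < \<theta>" "\<theta> < 1" and "compact P" "compact Q" "P \<noteq> {}" "Q \<noteq> {}"
    and C: "C \<in> sets borel" and comb: "\<And>p q. p \<in> P \<Longrightarrow> q \<in> Q \<Longrightarrow> \<theta> * p + (1 - \<theta>) * q \<in> C"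
  shows "ennreal \<theta> * emeasure lborel P + ennreal (1 - \<theta>) * emeasure lborel Q \<le> emeasure lborel C"
proof -
  obtain p0 where p0: "p0 \<in> P" "\<And>p. p \<in> P \<Longrightarrow> p \<le> p0"
    using compact_attains_sup[of P] assms by blast
  obtain q0 where q0: "q0 \<in> Q" "\<And>q. q \<in> Q \<Longrightarrow> q0 \<le> q"
    using compact_attains_inf[of Q] assms by blast
  define S1 where "S1 = (\<lambda>p. \<theta> * p + (1 - \<theta>) * q0) ` P"
  define S2 where "S2 = (\<lambda>q. (1 - \<theta>) * q + \<theta> * p0) ` Q"
  define z0 where "z0 = \<theta> * p0 + (1 - \<theta>) * q0"
  have "compact S1" "compact S2"
    unfolding S1_def S2_def using assms by (auto intro!: compact_continuous_image continuous_intros)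
  then have S_borel: "S1 \<in> sets borel" "S2 \<in> sets borel" "S2 - {z0} \<in> sets borel"
    by (auto simp: borel_compact)
  have overlap: "S1 \<inter> S2 \<subseteq> {z0}"
  proof
    fix z assume "z \<in> S1 \<inter> S2"
    then obtain p q where "p \<in> P" "q \<in> Q"
      and z: "z = \<theta> * p + (1 - \<theta>) * q0" "z = (1 - \<theta>) * q + \<theta> * p0"
      unfolding S1_def S2_def by auto
    then have "\<theta> * p \<le> \<theta> * p0" "(1 - \<theta>) * q0 \<le> (1 - \<theta>) * q"
      using p0 q0 \<theta> by (auto intro: mult_left_mono)
    then have "z = z0" using z unfolding z0_def by linarith
    then show "z \<in> {z0}" by simp
  qed
  have "S1 \<union> (S2 - {z0}) \<subseteq> C"
    unfolding S1_def S2_def using comb p0(1) q0(1) by (auto simp: add.commute)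
  then have "emeasure lborel S1 + emeasure lborel (S2 - {z0}) \<le> emeasure lborel C"
    using S_borel C overlap by (subst plus_emeasure) (auto intro!: emeasure_mono)
  moreover have "emeasure lborel (S2 - {z0}) = emeasure lborel S2"
    using S_borel by (intro emeasure_Diff_null_set) auto
  ultimately show ?thesis
    unfolding S1_def S2_def using assms
    by (simp add: emeasure_lborel_affine_image)
qed

lemma emeasure_lborel_inner_compact:
  fixes P :: "real set"
  assumes P: "P \<in> sets borel" and fin: "emeasure lborel P < \<infinity>"
  shows "emeasure lborel P = (SUP K \<in> {K. K \<subseteq> P \<and> compact K}. emeasure lborel K)"
proof -
  define N where "N = density lborel (indicator P)"
  have N: "emeasure N A = emeasure lborel (A \<inter> P)" if "A \<in> sets borel" for A
  proof -
    have "emeasure N A = (\<integral>\<^sup>+ x. indicator (A \<inter> P) x \<partial>lborel)"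
      unfolding N_def using that P
      by (simp add: emeasure_density indicator_inter_arith mult.commute)
    then show ?thesis using that P by simp
  qed
  have "emeasure N (space N) \<noteq> \<infinity>"
    using N[of UNIV] fin by (simp add: N_def)
  then have "emeasure N P = (SUP K \<in> {K. K \<subseteq> P \<and> compact K}. emeasure N K)"
    using inner_regular[of N P] P by (simp add: N_def)
  then show ?thesis
    using N P by (simp add: borel_compact Int_absorb2 cong: SUP_cong_simp)
qed

lemma brunn_minkowski_real:
  fixes P Q C :: "real set" and \<theta> :: real
  assumes \<theta>: "0 < \<theta>" "\<theta> < 1" and PQ: "P \<in> sets borel" "Q \<in> sets borel" "P \<noteq> {}" "Q \<noteq> {}"
    and fin: "emeasure lborel P < \<infinity>" "emeasure lborel Q < \<infinity>"
    and C: "C \<in> sets borel" and comb: "\<And>p q. p \<in> P \<Longrightarrow> q \<in> Q \<Longrightarrow> \<theta> * p + (1 - \<theta>) * q \<in> C"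
  shows "ennreal \<theta> * emeasure lborel P + ennreal (1 - \<theta>) * emeasure lborel Q \<le> emeasure lborel C"
proof -
  obtain p0 q0 where p0: "p0 \<in> P" and q0: "q0 \<in> Q" using PQ by auto
  define I where "I = {K. K \<subseteq> P \<and> compact K}"
  define J where "J = {L. L \<subseteq> Q \<and> compact L}"
  have IJ: "I \<noteq> {}" "J \<noteq> {}" unfolding I_def J_def by auto
  have compact_pair: "ennreal \<theta> * emeasure lborel K + ennreal (1 - \<theta>) * emeasure lborel L \<le> emeasure lborel C"
    if "K \<in> I" "L \<in> J" for K L
  proof -
    have "ennreal \<theta> * emeasure lborel K + ennreal (1 - \<theta>) * emeasure lborel L
        \<le> ennreal \<theta> * emeasure lborel (insert p0 K) + ennreal (1 - \<theta>) * emeasure lborel (insert q0 L)"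
      using that by (intro add_mono mult_left_mono emeasure_mono) (auto simp: I_def J_def borel_compact)
    also have "\<dots> \<le> emeasure lborel C"
      using that p0 q0 by (intro brunn_minkowski_real_compact \<theta> C comb) (auto simp: I_def J_def)
    finally show ?thesis .
  qed
  have "ennreal \<theta> * emeasure lborel P + ennreal (1 - \<theta>) * emeasure lborel Q
     = (SUP K\<in>I. ennreal \<theta> * emeasure lborel K) + (SUP L\<in>J. ennreal (1 - \<theta>) * emeasure lborel L)"
    unfolding I_def J_def
    by (simp add: emeasure_lborel_inner_compact[OF PQ(1) fin(1)]
        emeasure_lborel_inner_compact[OF PQ(2) fin(2)] SUP_mult_left_ennreal)
  also have "\<dots> = (SUP K\<in>I. SUP L\<in>J. ennreal \<theta> * emeasure lborel K + ennreal (1 - \<theta>) * emeasure lborel L)"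
    using IJ by (subst ennreal_SUP_add_left[symmetric]) (auto simp: ennreal_SUP_add_right)
  also have "\<dots> \<le> emeasure lborel C"
    using compact_pair by (intro SUP_least) auto
  finally show ?thesis .
qed

section \<open>Prekopa-Leindler inequality on the line\<close>

lemma nn_integral_clamp_layer_cake:
  fixes f :: "real \<Rightarrow> real"
  assumes [measurable]: "f \<in> borel_measurable borel"
  shows "(\<integral>\<^sup>+ r. indicator {0<..<1} r * emeasure lborel {x. r < f x} \<partial>lborel)
       = (\<integral>\<^sup>+ x. ennreal (min (max (f x) 0) 1) \<partial>lborel)"
proof -
  define g where "g = (\<lambda>(x::real, r::real). ennreal (if 0 < r \<and> r < min 1 (f x) then 1 else 0))"
  have [measurable]: "g \<in> borel_measurable (lborel \<Otimes>\<^sub>M lborel)"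
    unfolding g_def by measurable
  have inner_x: "indicator {0<..<1} r * emeasure lborel {x. r < f x} = (\<integral>\<^sup>+ x. g (x, r) \<partial>lborel)" for r
  proof (cases "0 < r \<and> r < 1")
    case True
    then have "(\<integral>\<^sup>+ x. g (x, r) \<partial>lborel) = (\<integral>\<^sup>+ x. indicator {x. r < f x} x \<partial>lborel)"
      unfolding g_def by (intro nn_integral_cong) (auto simp: indicator_def)
    then show ?thesis using True by simp
  next
    case False
    then have "g (x, r) = 0" for x unfolding g_def by auto
    then show ?thesis using False by simp
  qed
  have inner_r: "(\<integral>\<^sup>+ r. g (x, r) \<partial>lborel) = ennreal (min (max (f x) 0) 1)" for x
  proof (cases "f x > 0")
    case True
    have "(\<integral>\<^sup>+ r. g (x, r) \<partial>lborel) = (\<integral>\<^sup>+ r. indicator {0<..<min 1 (f x)} r \<partial>lborel)"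
      unfolding g_def by (intro nn_integral_cong) (auto simp: indicator_def)
    then show ?thesis using True by (simp add: min.commute)
  next
    case False
    then have "g (x, r) = 0" for r unfolding g_def by auto
    then show ?thesis using False by simp
  qed
  show ?thesis
    using lborel_pair.Fubini'[of "\<lambda>x r. g (x, r)"] by (simp add: inner_x inner_r)
qed

lemma emeasure_lborel_superlevel_finite:
  fixes f :: "real \<Rightarrow> real"
  assumes [measurable]: "f \<in> borel_measurable borel" and "integrable lborel f"
    and "\<And>x. 0 \<le> f x" and "0 < r"
  shows "emeasure lborel {x. r < f x} < \<infinity>"
proof -
  have "ennreal r * emeasure lborel {x. r < f x} = (\<integral>\<^sup>+ x. ennreal r * indicator {x. r < f x} x \<partial>lborel)"
    by (subst nn_integral_cmult_indicator) auto
  also have "\<dots> \<le> (\<integral>\<^sup>+ x. ennreal (f x) \<partial>lborel)"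
    by (intro nn_integral_mono) (auto simp: indicator_def intro!: ennreal_leI)
  also have "\<dots> < \<infinity>" using assms by (simp add: integrable_iff_bounded)
  finally show ?thesis using \<open>0 < r\<close> by (auto simp: ennreal_mult_less_top)
qed

lemma borel_measurable_emeasure_lborel_superlevel:
  fixes f :: "real \<Rightarrow> real"
  assumes [measurable]: "f \<in> borel_measurable borel"
  shows "(\<lambda>r. emeasure lborel {x. r < f x}) \<in> borel_measurable borel"
proof -
  have "(\<lambda>r. emeasure lborel {x. r < f x}) = (\<lambda>r. \<integral>\<^sup>+ x. indicator {x. r < f x} x \<partial>lborel)"
    by (intro ext nn_integral_indicator[symmetric]) measurable
  also have "\<dots> \<in> borel_measurable borel"
    by measurable
  finally show ?thesis .
qed

lemma superlevel_brunn_minkowski: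
  fixes f g h :: "real \<Rightarrow> real" and \<theta> r :: real
  assumes \<theta>: "0 < \<theta>" "\<theta> < 1"
    and [measurable]: "f \<in> borel_measurable borel" "g \<in> borel_measurable borel" "h \<in> borel_measurable borel"
    and "\<And>x. 0 \<le> f x" "\<And>x. 0 \<le> g x" and "integrable lborel f" "integrable lborel g"
    and "0 < r" "\<exists>x. r < f x" "\<exists>x. r < g x"
    and cond: "\<And>x y. f x powr \<theta> * g y powr (1 - \<theta>) \<le> h (\<theta> * x + (1 - \<theta>) * y)"
  shows "ennreal \<theta> * emeasure lborel {x. r < f x} + ennreal (1 - \<theta>) * emeasure lborel {x. r < g x}
      \<le> emeasure lborel {x. r < h x}"
proof -
  have fin: "emeasure lborel {x. r < f x} < \<infinity>" "emeasure lborel {x. r < g x} < \<infinity>"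
    using emeasure_lborel_superlevel_finite[of f r] emeasure_lborel_superlevel_finite[of g r] assms
    by auto
  have comb: "\<theta> * p + (1 - \<theta>) * q \<in> {x. r < h x}"
    if "p \<in> {x. r < f x}" "q \<in> {x. r < g x}" for p q
  proof -
    have "r powr \<theta> * r powr (1 - \<theta>) < f p powr \<theta> * g q powr (1 - \<theta>)"
      using that \<open>0 < r\<close> \<theta> by (intro mult_strict_mono powr_less_mono2) auto
    also have "\<dots> \<le> h (\<theta> * p + (1 - \<theta>) * q)" by (rule cond)
    finally show ?thesis using \<open>0 < r\<close> by (simp flip: powr_add)
  qed
  show ?thesis
    using assms by (intro brunn_minkowski_real[OF \<theta> _ _ _ _ fin _ comb]) auto
qed

lemma prekopa_leindler_real_normalized:
  fixes f g h :: "real \<Rightarrow> real" and \<theta> :: real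
  assumes \<theta>: "0 < \<theta>" "\<theta> < 1"
    and [measurable]: "f \<in> borel_measurable borel" "g \<in> borel_measurable borel" "h \<in> borel_measurable borel"
    and f01: "\<And>x. 0 \<le> f x \<and> f x \<le> 1" and g01: "\<And>x. 0 \<le> g x \<and> g x \<le> 1" and h_nonneg: "\<And>x. 0 \<le> h x"
    and f_sup: "\<And>r. r < 1 \<Longrightarrow> \<exists>x. r < f x" and g_sup: "\<And>r. r < 1 \<Longrightarrow> \<exists>x. r < g x"
    and int: "integrable lborel f" "integrable lborel g" "integrable lborel h"
    and cond: "\<And>x y. f x powr \<theta> * g y powr (1 - \<theta>) \<le> h (\<theta> * x + (1 - \<theta>) * y)"
  shows "\<theta> * (\<integral>x. f x \<partial>lborel) + (1 - \<theta>) * (\<integral>x. g x \<partial>lborel) \<le> (\<integral>x. h x \<partial>lborel)"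
proof -
  let ?L = "\<lambda>u r. indicator {0<..<1} r * emeasure lborel {x. r < u x}"
  have [measurable]: "(\<lambda>r. emeasure lborel {x. r < f x}) \<in> borel_measurable borel"
    "(\<lambda>r. emeasure lborel {x. r < g x}) \<in> borel_measurable borel"
    by (simp_all add: borel_measurable_emeasure_lborel_superlevel)
  have "ennreal \<theta> * (\<integral>\<^sup>+ x. ennreal (f x) \<partial>lborel) + ennreal (1 - \<theta>) * (\<integral>\<^sup>+ x. ennreal (g x) \<partial>lborel)
      = ennreal \<theta> * (\<integral>\<^sup>+ r. ?L f r \<partial>lborel) + ennreal (1 - \<theta>) * (\<integral>\<^sup>+ r. ?L g r \<partial>lborel)"
    using f01 g01 by (simp add: nn_integral_clamp_layer_cake)
  also have "\<dots> = (\<integral>\<^sup>+ r. ennreal \<theta> * ?L f r + ennreal (1 - \<theta>) * ?L g r \<partial>lborel)"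
    by (simp add: nn_integral_add nn_integral_cmult)
  also have "\<dots> \<le> (\<integral>\<^sup>+ r. ?L h r \<partial>lborel)"
  proof (intro nn_integral_mono)
    fix r :: real
    show "ennreal \<theta> * ?L f r + ennreal (1 - \<theta>) * ?L g r \<le> ?L h r"
      using superlevel_brunn_minkowski[OF \<theta>, of f g h r] f01 g01 int f_sup g_sup cond
      by (auto simp: indicator_def)
  qed
  also have "\<dots> = (\<integral>\<^sup>+ x. ennreal (min (max (h x) 0) 1) \<partial>lborel)"
    by (simp add: nn_integral_clamp_layer_cake)
  also have "\<dots> \<le> (\<integral>\<^sup>+ x. ennreal (h x) \<partial>lborel)"
    using h_nonneg by (intro nn_integral_mono) auto
  finally have nn: "ennreal \<theta> * (\<integral>\<^sup>+ x. ennreal (f x) \<partial>lborel) + ennreal (1 - \<theta>) * (\<integral>\<^sup>+ x. ennreal (g x) \<partial>lborel)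
      \<le> (\<integral>\<^sup>+ x. ennreal (h x) \<partial>lborel)" .
  have "(\<integral>\<^sup>+ x. ennreal (u x) \<partial>lborel) = ennreal (\<integral>x. u x \<partial>lborel)"
    if "integrable lborel u" "\<And>x. 0 \<le> u x" for u :: "real \<Rightarrow> real"
    using that by (auto intro!: nn_integral_eq_integral)
  with nn int f01 g01 h_nonneg \<theta>
  have "ennreal (\<theta> * (\<integral>x. f x \<partial>lborel) + (1 - \<theta>) * (\<integral>x. g x \<partial>lborel)) \<le> ennreal (\<integral>x. h x \<partial>lborel)"
    by (simp flip: ennreal_mult ennreal_plus add: integral_nonneg_AE)
  moreover have "0 \<le> (\<integral>x. h x \<partial>lborel)"
    using h_nonneg by (auto intro!: integral_nonneg_AE)
  ultimately show ?thesis by (simp add: ennreal_le_iff)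
qed

lemma Sup_range_unit_valued:
  fixes f :: "'a \<Rightarrow> real"
  assumes "\<And>y. 0 \<le> f y \<and> f y \<le> 1"
  shows "\<And>x. f x \<le> Sup (range f)" "Sup (range f) \<le> 1" "\<And>r. r < Sup (range f) \<Longrightarrow> \<exists>x. r < f x"
proof -
  have "bdd_above (range f)" using assms by (intro bdd_aboveI[of _ 1]) auto
  then show "\<And>x. f x \<le> Sup (range f)" "\<And>r. r < Sup (range f) \<Longrightarrow> \<exists>x. r < f x"
    by (auto intro: cSUP_upper simp: less_cSUP_iff)
  show "Sup (range f) \<le> 1" using assms by (auto intro: cSUP_least)
qed

lemma weighted_geometric_le_arithmetic_mean:
  fixes a b \<theta> :: real
  assumes "0 \<le> a" "0 \<le> b" "0 < \<theta>" "\<theta> < 1"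
  shows "a powr \<theta> * b powr (1 - \<theta>) \<le> \<theta> * a + (1 - \<theta>) * b"
  using Youngs_inequality_0[of \<theta> "1 - \<theta>" a b] assms by (cases "a = 0 \<or> b = 0") auto

text \<open>Brunn-Minkowski needs nonempty superlevel sets, whence the normalization \<open>sup f = sup g = 1\<close>
  above. Dividing by the suprema reduces to that case, and the weighted AM-GM inequality turns its
  arithmetic mean back into a geometric one.\<close>

lemma prekopa_leindler_real:
  fixes f g h :: "real \<Rightarrow> real" and \<theta> :: real
  assumes \<theta>: "0 < \<theta>" "\<theta> < 1"
    and [measurable]: "f \<in> borel_measurable borel" "g \<in> borel_measurable borel" "h \<in> borel_measurable borel"
    and f01: "\<And>x. 0 \<le> f x \<and> f x \<le> 1" and g01: "\<And>x. 0 \<le> g x \<and> g x \<le> 1" and h_nonneg: "\<And>x. 0 \<le> h x"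
    and int: "integrable lborel f" "integrable lborel g" "integrable lborel h"
    and cond: "\<And>x y. f x powr \<theta> * g y powr (1 - \<theta>) \<le> h (\<theta> * x + (1 - \<theta>) * y)"
  shows "(\<integral>x. f x \<partial>lborel) powr \<theta> * (\<integral>x. g x \<partial>lborel) powr (1 - \<theta>) \<le> (\<integral>x. h x \<partial>lborel)"
proof -
  define Mf where "Mf = Sup (range f)"
  define Mg where "Mg = Sup (range g)"
  note F = Sup_range_unit_valued[of f, OF f01, folded Mf_def]
  note G = Sup_range_unit_valued[of g, OF g01, folded Mg_def]
  have "0 \<le> (\<integral>x. h x \<partial>lborel)" using h_nonneg by (auto intro!: integral_nonneg_AE)
  show ?thesis
  proof (cases "Mf \<le> 0 \<or> Mg \<le> 0")
    case True
    then have "(\<forall>x. f x = 0) \<or> (\<forall>x. g x = 0)"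
      using F(1) G(1) f01 g01 by (meson order_antisym order_trans)
    then show ?thesis using \<open>0 \<le> (\<integral>x. h x \<partial>lborel)\<close> by auto
  next
    case False
    then have pos: "0 < Mf" "0 < Mg" by auto
    define c where "c = Mf powr \<theta> * Mg powr (1 - \<theta>)"
    have c: "0 < c" unfolding c_def using pos by simp
    let ?If = "(\<integral>x. f x \<partial>lborel) / Mf" and ?Ig = "(\<integral>x. g x \<partial>lborel) / Mg"
    have "\<theta> * (\<integral>x. f x / Mf \<partial>lborel) + (1 - \<theta>) * (\<integral>x. g x / Mg \<partial>lborel) \<le> (\<integral>x. h x / c \<partial>lborel)"
    proof (rule prekopa_leindler_real_normalized[OF \<theta>])
      show "0 \<le> f x / Mf \<and> f x / Mf \<le> 1" "0 \<le> g x / Mg \<and> g x / Mg \<le> 1" "0 \<le> h x / c" for x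
        using pos c F(1)[of x] G(1)[of x] f01[of x] g01[of x] h_nonneg[of x] by auto
      show "\<exists>x. r < f x / Mf" "\<exists>x. r < g x / Mg" if "r < 1" for r
        using that pos F(3)[of "r * Mf"] G(3)[of "r * Mg"] by (auto simp: field_simps)
      show "(f x / Mf) powr \<theta> * (g y / Mg) powr (1 - \<theta>) \<le> h (\<theta> * x + (1 - \<theta>) * y) / c" for x y
        using cond[of x y] c f01 g01 unfolding c_def by (simp add: powr_divide divide_right_mono)
    qed (use int in auto)
    then have mean: "\<theta> * ?If + (1 - \<theta>) * ?Ig \<le> (\<integral>x. h x \<partial>lborel) / c"
      by simp
    have "0 \<le> ?If" "0 \<le> ?Ig"
      using pos f01 g01 by (auto intro!: integral_nonneg_AE divide_nonneg_pos)
    have "(\<integral>x. f x \<partial>lborel) powr \<theta> * (\<integral>x. g x \<partial>lborel) powr (1 - \<theta>)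
        = (Mf * ?If) powr \<theta> * (Mg * ?Ig) powr (1 - \<theta>)"
      using pos by simp
    also have "\<dots> = c * (?If powr \<theta> * ?Ig powr (1 - \<theta>))"
      unfolding c_def powr_mult by (simp only: mult_ac)
    also have "\<dots> \<le> c * (\<theta> * ?If + (1 - \<theta>) * ?Ig)"
      using c \<theta> \<open>0 \<le> ?If\<close> \<open>0 \<le> ?Ig\<close> by (intro mult_left_mono weighted_geometric_le_arithmetic_mean) auto
    also have "\<dots> \<le> (\<integral>x. h x \<partial>lborel)"
      using c mean by (simp add: pos_le_divide_eq mult.commute)
    finally show ?thesis .
  qed
qed

section \<open>Prekopa-Leindler inequality for the standard Gaussian measure\<close>

lemma std_normal_density_powr_interpolation:
  fixes x y \<theta> :: real
  shows "std_normal_density x powr \<theta> * std_normal_density y powr (1 - \<theta>)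
       = std_normal_density (\<theta> * x + (1 - \<theta>) * y) * exp (- (\<theta> * (1 - \<theta>) * (x - y)\<^sup>2) / 2)"
proof -
  define C where "C = 1 / sqrt (2 * pi)"
  have "C powr \<theta> * C powr (1 - \<theta>) = C" by (simp add: C_def flip: powr_add)
  moreover have "exp (\<theta> * (- x\<^sup>2 / 2)) * exp ((1 - \<theta>) * (- y\<^sup>2 / 2))
      = exp (- (\<theta> * x + (1 - \<theta>) * y)\<^sup>2 / 2) * exp (- (\<theta> * (1 - \<theta>) * (x - y)\<^sup>2) / 2)"
    unfolding exp_add[symmetric] by (simp add: power2_eq_square field_simps)
  ultimately show ?thesis
    unfolding std_normal_density_def C_def[symmetric] powr_mult by (simp add: powr_def mult_ac)
qed

lemma std_normal_density_le_one: "std_normal_density x \<le> 1"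
proof -
  have "1 / sqrt (2 * pi) \<le> 1" using pi_gt3 by (simp add: divide_le_eq real_le_rsqrt)
  then show ?thesis
    unfolding std_normal_density_def by (intro mult_le_one) auto
qed

lemma prob_space_std_gaussian: "prob_space std_gaussian"
  unfolding std_gaussian_def using prob_space_normal_density[where \<mu>=0 and \<sigma>=1] by simp

lemma space_std_gaussian [simp]: "space std_gaussian = UNIV"
  by (simp add: std_gaussian_def)

lemma sets_std_gaussian [simp, measurable_cong]: "sets std_gaussian = sets borel"
  by (simp add: std_gaussian_def)

lemma integral_std_gaussian:
  fixes f :: "real \<Rightarrow> real"
  assumes [measurable]: "f \<in> borel_measurable borel"
  shows "(\<integral>x. f x \<partial>std_gaussian) = (\<integral>x. std_normal_density x * f x \<partial>lborel)"
  unfolding std_gaussian_def by (subst integral_density) auto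

lemma integrable_unit_valued:
  fixes f :: "'a \<Rightarrow> real"
  assumes "finite_measure M" "f \<in> borel_measurable M" "\<And>x. 0 \<le> f x \<and> f x \<le> 1"
  shows "integrable M f"
  using assms by (intro finite_measure.integrable_const_bound[where B=1]) auto

lemma integral_unit_valued:
  fixes f :: "'a \<Rightarrow> real"
  assumes "prob_space M" "f \<in> borel_measurable M" "\<And>x. 0 \<le> f x \<and> f x \<le> 1"
  shows "0 \<le> (\<integral>x. f x \<partial>M) \<and> (\<integral>x. f x \<partial>M) \<le> 1"
proof -
  interpret prob_space M by fact
  have "(\<integral>x. f x \<partial>M) \<le> (\<integral>x. 1 \<partial>M)"
    using assms by (intro integral_mono integrable_unit_valued) auto
  then show ?thesis using assms by (auto intro!: integral_nonneg_AE simp: prob_space)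
qed

text \<open>The log-concavity of the Gaussian density absorbs the factor \<open>exp (- \<theta> (1 - \<theta>) (x - y)\<^sup>2 / 2)\<close>.\<close>

lemma prekopa_leindler_std_gaussian:
  fixes f g h :: "real \<Rightarrow> real" and \<theta> :: real
  assumes \<theta>: "0 < \<theta>" "\<theta> < 1"
    and [measurable]: "f \<in> borel_measurable borel" "g \<in> borel_measurable borel" "h \<in> borel_measurable borel"
    and f01: "\<And>x. 0 \<le> f x \<and> f x \<le> 1" and g01: "\<And>x. 0 \<le> g x \<and> g x \<le> 1" and h01: "\<And>x. 0 \<le> h x \<and> h x \<le> 1"
    and cond: "\<And>x y. f x powr \<theta> * g y powr (1 - \<theta>) * exp (- (\<theta> * (1 - \<theta>) * (x - y)\<^sup>2) / 2)
                  \<le> h (\<theta> * x + (1 - \<theta>) * y)"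
  shows "(\<integral>x. f x \<partial>std_gaussian) powr \<theta> * (\<integral>x. g x \<partial>std_gaussian) powr (1 - \<theta>)
      \<le> (\<integral>x. h x \<partial>std_gaussian)"
proof -
  let ?\<phi> = std_normal_density
  have int: "integrable lborel (\<lambda>x. u x * ?\<phi> x)"
    if [measurable]: "u \<in> borel_measurable borel" and "\<And>x. 0 \<le> u x \<and> u x \<le> 1" for u
    using that by (intro Bochner_Integration.integrable_bound[OF integrable_normal_density[where \<mu>=0 and \<sigma>=1]])
      (auto intro!: mult_left_le_one_le simp: abs_mult)
  have "(\<integral>x. f x * ?\<phi> x \<partial>lborel) powr \<theta> * (\<integral>x. g x * ?\<phi> x \<partial>lborel) powr (1 - \<theta>)
      \<le> (\<integral>x. h x * ?\<phi> x \<partial>lborel)"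
  proof (rule prekopa_leindler_real[OF \<theta>])
    have unit: "0 \<le> u x * ?\<phi> x \<and> u x * ?\<phi> x \<le> 1" if "\<And>x. 0 \<le> u x \<and> u x \<le> 1" for u x
      using that[of x] std_normal_density_le_one[of x] by (auto intro: mult_le_one)
    show "0 \<le> f x * ?\<phi> x \<and> f x * ?\<phi> x \<le> 1" "0 \<le> g x * ?\<phi> x \<and> g x * ?\<phi> x \<le> 1"
      "0 \<le> h x * ?\<phi> x" for x
      using unit f01 g01 h01 by blast+
    show "(f x * ?\<phi> x) powr \<theta> * (g y * ?\<phi> y) powr (1 - \<theta>)
        \<le> h (\<theta> * x + (1 - \<theta>) * y) * ?\<phi> (\<theta> * x + (1 - \<theta>) * y)" for x y
    proof -
      have "(f x * ?\<phi> x) powr \<theta> * (g y * ?\<phi> y) powr (1 - \<theta>)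
          = f x powr \<theta> * g y powr (1 - \<theta>) * exp (- (\<theta> * (1 - \<theta>) * (x - y)\<^sup>2) / 2)
            * ?\<phi> (\<theta> * x + (1 - \<theta>) * y)"
        by (simp add: powr_mult std_normal_density_powr_interpolation mult_ac)
      also have "\<dots> \<le> h (\<theta> * x + (1 - \<theta>) * y) * ?\<phi> (\<theta> * x + (1 - \<theta>) * y)"
        using cond by (intro mult_right_mono) auto
      finally show ?thesis .
    qed
  qed (use int f01 g01 h01 in auto)
  then show ?thesis by (simp add: integral_std_gaussian mult.commute)
qed

abbreviation std_gaussian_Pi :: "'i set \<Rightarrow> ('i \<Rightarrow> real) measure" where
  "std_gaussian_Pi I \<equiv> PiM I (\<lambda>_. std_gaussian)"

lemma prob_space_std_gaussian_Pi: "prob_space (std_gaussian_Pi I)"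
  by (intro prob_space_PiM prob_space_std_gaussian)

lemma product_sigma_finite_std_gaussian: "product_sigma_finite (\<lambda>_. std_gaussian)"
  unfolding product_sigma_finite_def
  using prob_space_std_gaussian by (simp add: prob_space_imp_sigma_finite)

lemma measurable_fun_upd_std_gaussian_Pi:
  assumes "i \<notin> I"
  shows "(\<lambda>(s, x). x(i := s)) \<in> measurable (std_gaussian \<Otimes>\<^sub>M std_gaussian_Pi I) (std_gaussian_Pi (insert i I))"
  using measurable_fun_upd[of "insert i I" I i snd "std_gaussian \<Otimes>\<^sub>M std_gaussian_Pi I" "\<lambda>_. std_gaussian" fst]
  by (simp add: case_prod_beta')

lemma measurable_fun_upd_section:
  fixes f :: "('i \<Rightarrow> real) \<Rightarrow> real"
  assumes "f \<in> borel_measurable (std_gaussian_Pi (insert i I))"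
  shows "(\<lambda>x. f (x(i := s))) \<in> borel_measurable (std_gaussian_Pi I)"
proof -
  have "(\<lambda>x. x(i := s)) \<in> measurable (std_gaussian_Pi I) (std_gaussian_Pi (insert i I))"
    using measurable_fun_upd[of "insert i I" I i "\<lambda>x. x" "std_gaussian_Pi I" "\<lambda>_. std_gaussian" "\<lambda>_. s"]
    by simp
  from measurable_comp[OF this assms] show ?thesis by (simp add: comp_def)
qed

lemma borel_measurable_integral_fun_upd:
  fixes f :: "('i \<Rightarrow> real) \<Rightarrow> real"
  assumes "i \<notin> I" and f: "f \<in> borel_measurable (std_gaussian_Pi (insert i I))"
  shows "(\<lambda>s. \<integral>x. f (x(i := s)) \<partial>std_gaussian_Pi I) \<in> borel_measurable borel"
proof -
  interpret sigma_finite_measure "std_gaussian_Pi I"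
    by (rule prob_space_imp_sigma_finite[OF prob_space_std_gaussian_Pi])
  have "(\<lambda>(s, x). f (x(i := s))) \<in> borel_measurable (std_gaussian \<Otimes>\<^sub>M std_gaussian_Pi I)"
    using measurable_comp[OF measurable_fun_upd_std_gaussian_Pi[OF assms(1)] f]
    by (simp add: comp_def case_prod_beta')
  then have "(\<lambda>s. \<integral>x. f (x(i := s)) \<partial>std_gaussian_Pi I) \<in> borel_measurable std_gaussian"
    by (intro borel_measurable_lebesgue_integral) simp
  then show ?thesis by simp
qed

lemma integral_fun_upd_unit_valued:
  fixes f :: "('i \<Rightarrow> real) \<Rightarrow> real"
  assumes "f \<in> borel_measurable (std_gaussian_Pi (insert i I))" "\<And>x. 0 \<le> f x \<and> f x \<le> 1"
  shows "0 \<le> (\<integral>x. f (x(i := s)) \<partial>std_gaussian_Pi I) \<and> (\<integral>x. f (x(i := s)) \<partial>std_gaussian_Pi I) \<le> 1"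
  using integral_unit_valued[OF prob_space_std_gaussian_Pi measurable_fun_upd_section[OF assms(1)]] assms(2)
  by auto

lemma integral_std_gaussian_Pi_insert:
  fixes f :: "('i \<Rightarrow> real) \<Rightarrow> real"
  assumes I: "finite I" "i \<notin> I" and f[measurable]: "f \<in> borel_measurable (std_gaussian_Pi (insert i I))"
    and f01: "\<And>x. 0 \<le> f x \<and> f x \<le> 1"
  shows "(\<integral>x. f x \<partial>std_gaussian_Pi (insert i I))
       = (\<integral>s. (\<integral>x. f (x(i := s)) \<partial>std_gaussian_Pi I) \<partial>std_gaussian)"
proof -
  note slice = measurable_fun_upd_section[OF f]
  note fin = prob_space.finite_measure[OF prob_space_std_gaussian_Pi]
    prob_space.finite_measure[OF prob_space_std_gaussian]
  note unit = integral_fun_upd_unit_valued[OF f f01]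
  have "ennreal (\<integral>x. f x \<partial>std_gaussian_Pi (insert i I))
      = (\<integral>\<^sup>+x. ennreal (f x) \<partial>std_gaussian_Pi (insert i I))"
    using f01 fin by (intro nn_integral_eq_integral[symmetric] integrable_unit_valued) auto
  also have "\<dots> = (\<integral>\<^sup>+s. (\<integral>\<^sup>+x. ennreal (f (x(i := s))) \<partial>std_gaussian_Pi I) \<partial>std_gaussian)"
    using product_sigma_finite.product_nn_integral_insert_rev[OF product_sigma_finite_std_gaussian I,
        of "\<lambda>x. ennreal (f x)"] by simp
  also have "\<dots> = (\<integral>\<^sup>+s. ennreal (\<integral>x. f (x(i := s)) \<partial>std_gaussian_Pi I) \<partial>std_gaussian)"
    using f01 slice fin by (intro nn_integral_cong nn_integral_eq_integral integrable_unit_valued) auto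
  also have "\<dots> = ennreal (\<integral>s. (\<integral>x. f (x(i := s)) \<partial>std_gaussian_Pi I) \<partial>std_gaussian)"
    using unit borel_measurable_integral_fun_upd[OF I(2) f] fin
    by (intro nn_integral_eq_integral integrable_unit_valued) auto
  finally show ?thesis
    using unit integral_unit_valued[OF prob_space_std_gaussian_Pi f f01]
    by (subst (asm) ennreal_inj) (auto intro!: integral_nonneg_AE)
qed

lemma integral_std_gaussian_Pi_empty:
  fixes f :: "('i \<Rightarrow> real) \<Rightarrow> real"
  shows "(\<integral>x. f x \<partial>std_gaussian_Pi {}) = f (\<lambda>_. undefined)"
proof -
  have "(\<integral>x. f x \<partial>std_gaussian_Pi {}) = (\<integral>x. f (\<lambda>_. undefined) \<partial>(std_gaussian_Pi {} :: ('i \<Rightarrow> real) measure))"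
    by (rule Bochner_Integration.integral_cong[OF refl]) (simp add: space_PiM)
  also have "\<dots> = f (\<lambda>_. undefined)"
    using prob_space.prob_space[OF prob_space_std_gaussian_Pi, of "{} :: 'i set"] by simp
  finally show ?thesis .
qed

definition gaussian_prekopa_leindler :: "real \<Rightarrow> 'i set \<Rightarrow> bool" where
  "gaussian_prekopa_leindler \<theta> I \<longleftrightarrow>
    (\<forall>f g h. f \<in> borel_measurable (std_gaussian_Pi I) \<longrightarrow> g \<in> borel_measurable (std_gaussian_Pi I) \<longrightarrow>
      h \<in> borel_measurable (std_gaussian_Pi I) \<longrightarrow>
      (\<forall>x. 0 \<le> f x \<and> f x \<le> 1) \<longrightarrow> (\<forall>x. 0 \<le> g x \<and> g x \<le> 1) \<longrightarrow> (\<forall>x. 0 \<le> h x \<and> h x \<le> 1) \<longrightarrow>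
      (\<forall>x\<in>space (std_gaussian_Pi I). \<forall>y\<in>space (std_gaussian_Pi I).
        f x powr \<theta> * g y powr (1 - \<theta>) * exp (- (\<theta> * (1 - \<theta>) * (\<Sum>j\<in>I. (x j - y j)\<^sup>2)) / 2)
          \<le> h (\<lambda>j\<in>I. \<theta> * x j + (1 - \<theta>) * y j)) \<longrightarrow>
      (\<integral>x. f x \<partial>std_gaussian_Pi I) powr \<theta> * (\<integral>x. g x \<partial>std_gaussian_Pi I) powr (1 - \<theta>)
        \<le> (\<integral>x. h x \<partial>std_gaussian_Pi I))"

lemma gaussian_prekopa_leindlerD:
  fixes f g h :: "('i \<Rightarrow> real) \<Rightarrow> real"
  assumes "gaussian_prekopa_leindler \<theta> I"
    and "f \<in> borel_measurable (std_gaussian_Pi I)" "g \<in> borel_measurable (std_gaussian_Pi I)"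
      "h \<in> borel_measurable (std_gaussian_Pi I)"
    and "\<And>x. 0 \<le> f x \<and> f x \<le> 1" "\<And>x. 0 \<le> g x \<and> g x \<le> 1" "\<And>x. 0 \<le> h x \<and> h x \<le> 1"
    and "\<And>x y. x \<in> space (std_gaussian_Pi I) \<Longrightarrow> y \<in> space (std_gaussian_Pi I) \<Longrightarrow>
       f x powr \<theta> * g y powr (1 - \<theta>) * exp (- (\<theta> * (1 - \<theta>) * (\<Sum>j\<in>I. (x j - y j)\<^sup>2)) / 2)
       \<le> h (\<lambda>j\<in>I. \<theta> * x j + (1 - \<theta>) * y j)"
  shows "(\<integral>x. f x \<partial>std_gaussian_Pi I) powr \<theta> * (\<integral>x. g x \<partial>std_gaussian_Pi I) powr (1 - \<theta>)
      \<le> (\<integral>x. h x \<partial>std_gaussian_Pi I)"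
  using assms unfolding gaussian_prekopa_leindler_def by blast

lemma gaussian_prekopa_leindler_empty: "gaussian_prekopa_leindler \<theta> {}"
proof -
  have "restrict u {} = (\<lambda>_. undefined)" for u :: "'i \<Rightarrow> real"
    by (auto simp: restrict_def)
  then show ?thesis
    unfolding gaussian_prekopa_leindler_def by (simp add: integral_std_gaussian_Pi_empty space_PiM)
qed

text \<open>The truncation \<open>min 1\<close> keeps the right-hand side unit-valued, so that the inequality on
  \<open>I\<close> can be applied to the sections.\<close>

lemma prekopa_leindler_hypothesis_section:
  fixes f g h :: "('i \<Rightarrow> real) \<Rightarrow> real" and \<theta> s1 s2 :: real
  assumes I: "finite I" "i \<notin> I" and \<theta>: "0 < \<theta>" "\<theta> < 1"
    and f01: "\<And>x. 0 \<le> f x \<and> f x \<le> 1" and g01: "\<And>x. 0 \<le> g x \<and> g x \<le> 1"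
    and cond: "\<And>x y. x \<in> space (std_gaussian_Pi (insert i I)) \<Longrightarrow> y \<in> space (std_gaussian_Pi (insert i I)) \<Longrightarrow>
       f x powr \<theta> * g y powr (1 - \<theta>) * exp (- (\<theta> * (1 - \<theta>) * (\<Sum>j\<in>insert i I. (x j - y j)\<^sup>2)) / 2)
       \<le> h (\<lambda>j\<in>insert i I. \<theta> * x j + (1 - \<theta>) * y j)"
    and x: "x \<in> space (std_gaussian_Pi I)" and y: "y \<in> space (std_gaussian_Pi I)"
  shows "f (x(i := s1)) powr \<theta> * g (y(i := s2)) powr (1 - \<theta>) * exp (- (\<theta> * (1 - \<theta>) * (\<Sum>j\<in>I. (x j - y j)\<^sup>2)) / 2)
      \<le> min 1 (h ((\<lambda>j\<in>I. \<theta> * x j + (1 - \<theta>) * y j)(i := \<theta> * s1 + (1 - \<theta>) * s2))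
               / exp (- (\<theta> * (1 - \<theta>) * (s1 - s2)\<^sup>2) / 2))"
proof -
  let ?S = "\<Sum>j\<in>I. (x j - y j)\<^sup>2"
  let ?lhs = "f (x(i := s1)) powr \<theta> * g (y(i := s2)) powr (1 - \<theta>) * exp (- (\<theta> * (1 - \<theta>) * ?S) / 2)"
  have "x(i := s1) \<in> space (std_gaussian_Pi (insert i I))" "y(i := s2) \<in> space (std_gaussian_Pi (insert i I))"
    using x y by (auto simp: space_PiM PiE_iff extensional_def)
  note cond = cond[OF this]
  have "(\<Sum>j\<in>insert i I. ((x(i := s1)) j - (y(i := s2)) j)\<^sup>2) = (s1 - s2)\<^sup>2 + ?S"
    using I by (simp add: sum.insert, intro sum.cong) auto
  moreover have "(\<lambda>j\<in>insert i I. \<theta> * (x(i := s1)) j + (1 - \<theta>) * (y(i := s2)) j)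
      = (\<lambda>j\<in>I. \<theta> * x j + (1 - \<theta>) * y j)(i := \<theta> * s1 + (1 - \<theta>) * s2)"
    using I by (intro ext) auto
  moreover have "exp (- (\<theta> * (1 - \<theta>) * ((s1 - s2)\<^sup>2 + ?S)) / 2)
      = exp (- (\<theta> * (1 - \<theta>) * (s1 - s2)\<^sup>2) / 2) * exp (- (\<theta> * (1 - \<theta>) * ?S) / 2)"
    by (simp add: exp_add[symmetric] algebra_simps add_divide_distrib diff_divide_distrib)
  ultimately have "?lhs * exp (- (\<theta> * (1 - \<theta>) * (s1 - s2)\<^sup>2) / 2)
      \<le> h ((\<lambda>j\<in>I. \<theta> * x j + (1 - \<theta>) * y j)(i := \<theta> * s1 + (1 - \<theta>) * s2))"
    using cond by (simp add: mult_ac)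
  moreover have "?lhs \<le> 1 * 1 * 1"
  proof (intro mult_mono)
    have "0 \<le> ?S" by (intro sum_nonneg) auto
    then show "exp (- (\<theta> * (1 - \<theta>) * ?S) / 2) \<le> 1" using \<theta> by simp
  qed (use f01 g01 \<theta> in \<open>auto intro: powr_le1\<close>)
  ultimately show ?thesis by (simp add: pos_le_divide_eq)
qed

lemma gaussian_prekopa_leindler_partial_integrals:
  fixes f g h :: "('i \<Rightarrow> real) \<Rightarrow> real" and \<theta> s1 s2 :: real
  assumes PL: "gaussian_prekopa_leindler \<theta> I" and I: "finite I" "i \<notin> I" and \<theta>: "0 < \<theta>" "\<theta> < 1"
    and f: "f \<in> borel_measurable (std_gaussian_Pi (insert i I))"
    and g: "g \<in> borel_measurable (std_gaussian_Pi (insert i I))"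
    and h: "h \<in> borel_measurable (std_gaussian_Pi (insert i I))"
    and f01: "\<And>x. 0 \<le> f x \<and> f x \<le> 1" and g01: "\<And>x. 0 \<le> g x \<and> g x \<le> 1" and h01: "\<And>x. 0 \<le> h x \<and> h x \<le> 1"
    and cond: "\<And>x y. x \<in> space (std_gaussian_Pi (insert i I)) \<Longrightarrow> y \<in> space (std_gaussian_Pi (insert i I)) \<Longrightarrow>
       f x powr \<theta> * g y powr (1 - \<theta>) * exp (- (\<theta> * (1 - \<theta>) * (\<Sum>j\<in>insert i I. (x j - y j)\<^sup>2)) / 2)
       \<le> h (\<lambda>j\<in>insert i I. \<theta> * x j + (1 - \<theta>) * y j)"
  shows "(\<integral>x. f (x(i := s1)) \<partial>std_gaussian_Pi I) powr \<theta> * (\<integral>x. g (x(i := s2)) \<partial>std_gaussian_Pi I) powr (1 - \<theta>)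
      * exp (- (\<theta> * (1 - \<theta>) * (s1 - s2)\<^sup>2) / 2)
      \<le> (\<integral>x. h (x(i := \<theta> * s1 + (1 - \<theta>) * s2)) \<partial>std_gaussian_Pi I)"
proof -
  define c where "c = exp (- (\<theta> * (1 - \<theta>) * (s1 - s2)\<^sup>2) / 2)"
  define s where "s = \<theta> * s1 + (1 - \<theta>) * s2"
  define h' where "h' z = min 1 (h (z(i := s)) / c)" for z
  have "0 < c" by (simp add: c_def)
  have h'_measurable: "h' \<in> borel_measurable (std_gaussian_Pi I)"
    unfolding h'_def using measurable_fun_upd_section[OF h] by measurable
  have "(\<integral>x. f (x(i := s1)) \<partial>std_gaussian_Pi I) powr \<theta> * (\<integral>x. g (x(i := s2)) \<partial>std_gaussian_Pi I) powr (1 - \<theta>)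
      \<le> (\<integral>x. h' x \<partial>std_gaussian_Pi I)"
  proof (rule gaussian_prekopa_leindlerD[OF PL])
    show "0 \<le> h' x \<and> h' x \<le> 1" for x
      unfolding h'_def using h01 \<open>0 < c\<close> by auto
    show "f (x(i := s1)) powr \<theta> * g (y(i := s2)) powr (1 - \<theta>)
        * exp (- (\<theta> * (1 - \<theta>) * (\<Sum>j\<in>I. (x j - y j)\<^sup>2)) / 2) \<le> h' (\<lambda>j\<in>I. \<theta> * x j + (1 - \<theta>) * y j)"
      if "x \<in> space (std_gaussian_Pi I)" "y \<in> space (std_gaussian_Pi I)" for x y
      unfolding h'_def c_def s_def
      by (rule prekopa_leindler_hypothesis_section[OF I \<theta> f01 g01 cond that])
  qed (use f01 g01 h'_measurable measurable_fun_upd_section[OF f] measurable_fun_upd_section[OF g] in blast)+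
  also have "\<dots> \<le> (\<integral>x. h (x(i := s)) / c \<partial>std_gaussian_Pi I)"
    using h01 \<open>0 < c\<close> measurable_fun_upd_section[OF h] prob_space_std_gaussian_Pi
    by (intro integral_mono integrable_unit_valued integrable_divide_zero prob_space.finite_measure)
      (auto simp: h'_def)
  finally show ?thesis
    unfolding s_def[symmetric] c_def[symmetric] using \<open>0 < c\<close> by (simp add: pos_le_divide_eq)
qed

text \<open>Tensorization: the partial integrals over the remaining coordinates satisfy the
  one-dimensional hypothesis.\<close>

lemma gaussian_prekopa_leindler_insert:
  fixes I :: "'i set"
  assumes PL: "gaussian_prekopa_leindler \<theta> I" and I: "finite I" "i \<notin> I" and \<theta>: "0 < \<theta>" "\<theta> < 1"
  shows "gaussian_prekopa_leindler \<theta> (insert i I)"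
  unfolding gaussian_prekopa_leindler_def
proof (intro allI impI)
  fix f g h :: "('i \<Rightarrow> real) \<Rightarrow> real"
  assume f: "f \<in> borel_measurable (std_gaussian_Pi (insert i I))"
    and g: "g \<in> borel_measurable (std_gaussian_Pi (insert i I))"
    and h: "h \<in> borel_measurable (std_gaussian_Pi (insert i I))"
    and f01[rule_format]: "\<forall>x. 0 \<le> f x \<and> f x \<le> 1" and g01[rule_format]: "\<forall>x. 0 \<le> g x \<and> g x \<le> 1"
    and h01[rule_format]: "\<forall>x. 0 \<le> h x \<and> h x \<le> 1"
    and cond[rule_format]: "\<forall>x\<in>space (std_gaussian_Pi (insert i I)). \<forall>y\<in>space (std_gaussian_Pi (insert i I)).
       f x powr \<theta> * g y powr (1 - \<theta>) * exp (- (\<theta> * (1 - \<theta>) * (\<Sum>j\<in>insert i I. (x j - y j)\<^sup>2)) / 2)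
       \<le> h (\<lambda>j\<in>insert i I. \<theta> * x j + (1 - \<theta>) * y j)"
  let ?F = "\<lambda>u s. \<integral>x. u (x(i := s)) \<partial>std_gaussian_Pi I"
  have "(\<integral>s. ?F f s \<partial>std_gaussian) powr \<theta> * (\<integral>s. ?F g s \<partial>std_gaussian) powr (1 - \<theta>)
      \<le> (\<integral>s. ?F h s \<partial>std_gaussian)"
  proof (rule prekopa_leindler_std_gaussian[OF \<theta>])
    show "?F f s1 powr \<theta> * ?F g s2 powr (1 - \<theta>) * exp (- (\<theta> * (1 - \<theta>) * (s1 - s2)\<^sup>2) / 2)
        \<le> ?F h (\<theta> * s1 + (1 - \<theta>) * s2)" for s1 s2
      by (rule gaussian_prekopa_leindler_partial_integrals[OF PL I \<theta> f g h f01 g01 h01 cond])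
  qed (use integral_fun_upd_unit_valued[OF f f01] integral_fun_upd_unit_valued[OF g g01]
      integral_fun_upd_unit_valued[OF h h01] borel_measurable_integral_fun_upd[OF I(2)] f g h in blast)+
  then show "(\<integral>x. f x \<partial>std_gaussian_Pi (insert i I)) powr \<theta> * (\<integral>x. g x \<partial>std_gaussian_Pi (insert i I)) powr (1 - \<theta>)
      \<le> (\<integral>x. h x \<partial>std_gaussian_Pi (insert i I))"
    using f g h f01 g01 h01 I by (simp add: integral_std_gaussian_Pi_insert)
qed

lemma gaussian_prekopa_leindler_finite:
  assumes "finite I" "0 < \<theta>" "\<theta> < 1"
  shows "gaussian_prekopa_leindler \<theta> I"
  using assms(1)
  by (induction I rule: finite_induct) (auto intro: gaussian_prekopa_leindler_empty gaussian_prekopa_leindler_insert assms)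

lemma std_gaussian_Pi_separated_sets:
  fixes A B :: "('i \<Rightarrow> real) set" and \<theta> D :: real
  assumes "finite I" and \<theta>: "0 < \<theta>" "\<theta> < 1"
    and A: "A \<in> sets (std_gaussian_Pi I)" and B: "B \<in> sets (std_gaussian_Pi I)"
    and sep: "\<And>x y. x \<in> A \<Longrightarrow> y \<in> B \<Longrightarrow> D\<^sup>2 \<le> (\<Sum>j\<in>I. (x j - y j)\<^sup>2)"
  shows "measure (std_gaussian_Pi I) A powr \<theta> * measure (std_gaussian_Pi I) B powr (1 - \<theta>)
      \<le> exp (- (\<theta> * (1 - \<theta>) * D\<^sup>2) / 2)"
proof -
  interpret prob_space "std_gaussian_Pi I" by (rule prob_space_std_gaussian_Pi)
  let ?c = "exp (- (\<theta> * (1 - \<theta>) * D\<^sup>2) / 2)"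
  have "(\<integral>x. indicator A x \<partial>std_gaussian_Pi I) powr \<theta> * (\<integral>x. indicator B x \<partial>std_gaussian_Pi I) powr (1 - \<theta>)
      \<le> (\<integral>x. ?c \<partial>std_gaussian_Pi I)"
  proof (rule gaussian_prekopa_leindlerD[OF gaussian_prekopa_leindler_finite[OF \<open>finite I\<close> \<theta>]])
    show "0 \<le> ?c \<and> ?c \<le> 1" using \<theta> by simp
    show "indicator A x powr \<theta> * indicator B y powr (1 - \<theta>)
        * exp (- (\<theta> * (1 - \<theta>) * (\<Sum>j\<in>I. (x j - y j)\<^sup>2)) / 2) \<le> ?c" for x y
    proof (cases "x \<in> A \<and> y \<in> B")
      case True
      then have "\<theta> * (1 - \<theta>) * D\<^sup>2 \<le> \<theta> * (1 - \<theta>) * (\<Sum>j\<in>I. (x j - y j)\<^sup>2)"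
        using sep \<theta> by (intro mult_left_mono) auto
      then show ?thesis using True by simp
    qed (use \<theta> in \<open>auto simp: indicator_def\<close>)
  qed (use A B in \<open>auto simp: indicator_def\<close>)
  then show ?thesis using A B by (simp add: prob_space)
qed

section \<open>Laws in the class L_n(K)\<close>

lemma distr_PiM_componentwise:
  fixes M :: "'i::finite \<Rightarrow> 'a measure" and N :: "'i \<Rightarrow> 'b measure" and g :: "'i \<Rightarrow> 'a \<Rightarrow> 'b"
  assumes M: "\<And>i. prob_space (M i)" and g: "\<And>i. g i \<in> measurable (M i) (N i)"
  shows "distr (PiM UNIV M) (PiM UNIV (\<lambda>i. distr (M i) (N i) (g i))) (\<lambda>z i. g i (z i))
       = PiM UNIV (\<lambda>i. distr (M i) (N i) (g i))"
    (is "distr _ (PiM UNIV ?D) ?G = _")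
proof (rule product_sigma_finite.PiM_eqI)
  show "product_sigma_finite ?D"
    unfolding product_sigma_finite_def
    using M g by (auto intro!: prob_space_imp_sigma_finite prob_space.prob_space_distr)
  have "g i (z i) \<in> space (N i)" if "z \<in> space (PiM UNIV M)" for z i
    using that g by (metis PiE_iff UNIV_I measurable_space space_PiM)
  then have measurable_G: "?G \<in> measurable (PiM UNIV M) (PiM UNIV ?D)"
    using g by (intro measurable_PiM_single') (auto intro: measurable_comp[OF measurable_component_singleton])
  fix A assume A: "\<And>i. i \<in> UNIV \<Longrightarrow> A i \<in> sets (?D i)"
  have "?G -` Pi\<^sub>E UNIV A \<inter> space (PiM UNIV M) = Pi\<^sub>E UNIV (\<lambda>i. g i -` A i \<inter> space (M i))"
    by (auto simp: space_PiM PiE_iff)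
  moreover have "g i -` A i \<inter> space (M i) \<in> sets (M i)" for i
    using A g by (auto intro: measurable_sets)
  ultimately show "emeasure (distr (PiM UNIV M) (PiM UNIV ?D) ?G) (Pi\<^sub>E UNIV A) = (\<Prod>i\<in>UNIV. emeasure (?D i) (A i))"
    using A measurable_G M g
    by (simp add: emeasure_distr sets_PiM_I_finite product_sigma_finite.emeasure_PiM
        product_sigma_finite_def prob_space_imp_sigma_finite)
qed simp_all

lemma borel_measurable_vec_lambda:
  fixes F :: "'a \<Rightarrow> 'n::finite \<Rightarrow> real"
  assumes "\<And>i. (\<lambda>z. F z i) \<in> borel_measurable M"
  shows "(\<lambda>z. vec_lambda (F z)) \<in> borel_measurable M"
proof (subst borel_measurable_euclidean_space, intro ballI)
  fix b :: "real^'n" assume "b \<in> Basis"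
  then obtain i where "b = axis i 1" by (auto simp: Basis_vec_def)
  then show "(\<lambda>z. vec_lambda (F z) \<bullet> b) \<in> borel_measurable M"
    using assms[of i] by (simp add: inner_axis)
qed

lemma lip_gauss_class_n_eq_distr_std_gaussian_Pi:
  fixes N :: "(real^'n) measure"
  assumes "N \<in> lip_gauss_class_n K"
  obtains g where "\<And>i. K-lipschitz_on UNIV (g i)"
    "N = distr (std_gaussian_Pi UNIV) borel (\<lambda>z. vec_lambda (\<lambda>i. g i (z i)))"
proof -
  obtain \<nu> where N: "N = distr (PiM UNIV \<nu>) borel (\<lambda>x. vec_lambda x)"
    and \<nu>: "\<forall>i. \<exists>g. \<nu> i = distr std_gaussian borel g \<and> K-lipschitz_on UNIV g"
    using assms unfolding lip_gauss_class_n_def lip_gauss_class_def by auto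
  then obtain g where g: "\<And>i. K-lipschitz_on UNIV (g i)" and \<nu>_eq: "\<nu> = (\<lambda>i. distr std_gaussian borel (g i))"
    by (metis choice)
  have [measurable]: "g i \<in> borel_measurable borel" for i
    using lipschitz_on_continuous_on[OF g] by (rule borel_measurable_continuous_onI)
  have G: "(\<lambda>z i. g i (z i)) \<in> measurable (std_gaussian_Pi UNIV) (PiM UNIV \<nu>)"
    unfolding \<nu>_eq by (intro measurable_PiM_single') (auto simp: space_PiM)
  have "N = distr (distr (std_gaussian_Pi UNIV) (PiM UNIV \<nu>) (\<lambda>z i. g i (z i))) borel (\<lambda>x. vec_lambda x)"
    unfolding N \<nu>_eq using prob_space_std_gaussian by (subst distr_PiM_componentwise) auto
  also have "\<dots> = distr (std_gaussian_Pi UNIV) borel ((\<lambda>x. vec_lambda x) \<circ> (\<lambda>z i. g i (z i)))"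
    using G by (intro distr_distr borel_measurable_vec_lambda) (simp add: \<nu>_eq)
  finally have "N = distr (std_gaussian_Pi UNIV) borel (\<lambda>z. vec_lambda (\<lambda>i. g i (z i)))"
    by (simp add: comp_def)
  with g that show ?thesis by blast
qed

lemma lip_gauss_class_n_nonneg:
  assumes "N \<in> lip_gauss_class_n K"
  shows "0 \<le> K"
  using lip_gauss_class_n_eq_distr_std_gaussian_Pi[OF assms] lipschitz_on_nonneg by metis

lemma prob_space_lip_gauss_class_n:
  assumes "N \<in> lip_gauss_class_n K"
  shows "prob_space N"
proof -
  obtain g where lip: "\<And>i. K-lipschitz_on UNIV (g i)"
    and N: "N = distr (std_gaussian_Pi UNIV) borel (\<lambda>z. vec_lambda (\<lambda>i. g i (z i)))"
    using lip_gauss_class_n_eq_distr_std_gaussian_Pi[OF assms] by blast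
  have [measurable]: "g i \<in> borel_measurable borel" for i
    using lipschitz_on_continuous_on[OF lip] by (rule borel_measurable_continuous_onI)
  show ?thesis
    unfolding N using prob_space_std_gaussian_Pi
    by (intro prob_space.prob_space_distr borel_measurable_vec_lambda) simp_all
qed

lemma dist_vec_lambda_lipschitz_components:
  fixes g :: "'n::finite \<Rightarrow> real \<Rightarrow> real"
  assumes lip: "\<And>i. K-lipschitz_on UNIV (g i)"
  shows "dist (vec_lambda (\<lambda>i. g i (z i))) (vec_lambda (\<lambda>i. g i (w i))) \<le> K * sqrt (\<Sum>i\<in>UNIV. (z i - w i)\<^sup>2)"
proof -
  have "0 \<le> K" using lipschitz_on_nonneg[OF lip] .
  have "(g i (z i) - g i (w i))\<^sup>2 \<le> K\<^sup>2 * (z i - w i)\<^sup>2" for i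
  proof -
    have "\<bar>g i (z i) - g i (w i)\<bar> \<le> \<bar>K * (z i - w i)\<bar>"
      using lipschitz_onD[OF lip[of i], of "z i" "w i"] \<open>0 \<le> K\<close> by (simp add: dist_real_def abs_mult)
    then show ?thesis by (simp add: abs_le_square_iff power_mult_distrib)
  qed
  then have "sqrt (\<Sum>i\<in>UNIV. (g i (z i) - g i (w i))\<^sup>2) \<le> sqrt (\<Sum>i\<in>UNIV. K\<^sup>2 * (z i - w i)\<^sup>2)"
    by (intro real_sqrt_le_mono sum_mono)
  also have "\<dots> = K * sqrt (\<Sum>i\<in>UNIV. (z i - w i)\<^sup>2)"
    using \<open>0 \<le> K\<close> by (simp add: sum_distrib_left[symmetric] real_sqrt_mult)
  finally show ?thesis by (simp add: dist_vec_def L2_set_def dist_real_def)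
qed

lemma lip_gauss_class_n_separated_sets:
  fixes N :: "(real^'n) measure" and S T :: "(real^'n) set"
  assumes N: "N \<in> lip_gauss_class_n K" and "0 < K" and \<theta>: "0 < \<theta>" "\<theta> < 1"
    and S: "S \<in> sets borel" and T: "T \<in> sets borel"
    and "0 \<le> r" and sep: "\<And>x y. x \<in> S \<Longrightarrow> y \<in> T \<Longrightarrow> r \<le> dist x y"
  shows "measure N S powr \<theta> * measure N T powr (1 - \<theta>) \<le> exp (- (\<theta> * (1 - \<theta>) * (r / K)\<^sup>2) / 2)"
proof -
  obtain g where lip: "\<And>i. K-lipschitz_on UNIV (g i)"
    and N_eq: "N = distr (std_gaussian_Pi UNIV) borel (\<lambda>z. vec_lambda (\<lambda>i. g i (z i)))"
    using lip_gauss_class_n_eq_distr_std_gaussian_Pi[OF N] by blast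
  define G where "G z = vec_lambda (\<lambda>i. g i (z i))" for z :: "'n \<Rightarrow> real"
  have [measurable]: "g i \<in> borel_measurable borel" for i
    using lipschitz_on_continuous_on[OF lip] by (rule borel_measurable_continuous_onI)
  have G: "G \<in> borel_measurable (std_gaussian_Pi UNIV)"
    unfolding G_def by (intro borel_measurable_vec_lambda) simp
  let ?pre = "\<lambda>U. G -` U \<inter> space (std_gaussian_Pi UNIV)"
  have "(r / K)\<^sup>2 \<le> (\<Sum>j\<in>UNIV. (z j - w j)\<^sup>2)" if "z \<in> ?pre S" "w \<in> ?pre T" for z w
  proof -
    have "r \<le> K * sqrt (\<Sum>j\<in>UNIV. (z j - w j)\<^sup>2)"
      using sep[of "G z" "G w"] that dist_vec_lambda_lipschitz_components[where g=g and K=K and z=z and w=w, OF lip]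
      unfolding G_def by auto
    then have "r / K \<le> sqrt (\<Sum>j\<in>UNIV. (z j - w j)\<^sup>2)"
      using \<open>0 < K\<close> by (simp add: divide_le_eq mult.commute)
    then have "(r / K)\<^sup>2 \<le> (sqrt (\<Sum>j\<in>UNIV. (z j - w j)\<^sup>2))\<^sup>2"
      using \<open>0 \<le> r\<close> \<open>0 < K\<close> by (intro power_mono) auto
    then show ?thesis by (simp add: sum_nonneg)
  qed
  then have "measure (std_gaussian_Pi UNIV) (?pre S) powr \<theta> * measure (std_gaussian_Pi UNIV) (?pre T) powr (1 - \<theta>)
      \<le> exp (- (\<theta> * (1 - \<theta>) * (r / K)\<^sup>2) / 2)"
    using S T G by (intro std_gaussian_Pi_separated_sets \<theta>) auto
  then show ?thesis
    using S T G unfolding N_eq G_def by (simp add: measure_distr)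
qed

section \<open>Deviation of convex functions\<close>

lemma convex_on_gradient_inequality:
  fixes f :: "'a::real_inner \<Rightarrow> real" and v :: 'a
  assumes der: "(f has_derivative (\<lambda>h. v \<bullet> h)) (at x)" and "convex_on UNIV f"
  shows "f x + v \<bullet> (y - x) \<le> f y"
proof -
  define \<phi> where "\<phi> \<tau> = f (x + \<tau> *\<^sub>R (y - x))" for \<tau> :: real
  have "convex_on UNIV \<phi>"
  proof (rule convex_onI)
    fix t a b :: real assume "0 < t" "t < 1"
    have "x + ((1 - t) *\<^sub>R a + t *\<^sub>R b) *\<^sub>R (y - x)
        = (1 - t) *\<^sub>R (x + a *\<^sub>R (y - x)) + t *\<^sub>R (x + b *\<^sub>R (y - x))"
      by (simp add: algebra_simps)
    then show "\<phi> ((1 - t) *\<^sub>R a + t *\<^sub>R b) \<le> (1 - t) * \<phi> a + t * \<phi> b"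
      unfolding \<phi>_def using convex_onD[OF \<open>convex_on UNIV f\<close>, of t] \<open>0 < t\<close> \<open>t < 1\<close> by simp
  qed simp
  moreover have line: "((\<lambda>\<tau>::real. x + \<tau> *\<^sub>R (y - x)) has_derivative (\<lambda>h. h *\<^sub>R (y - x))) (at 0)"
    by (auto intro!: derivative_eq_intros)
  have "(\<phi> has_derivative (\<lambda>h. v \<bullet> (h *\<^sub>R (y - x)))) (at 0)"
    unfolding \<phi>_def using has_derivative_compose[OF line, of f "\<lambda>h. v \<bullet> h"] der by (simp add: o_def)
  then have "(\<phi> has_field_derivative (v \<bullet> (y - x))) (at 0)"
    by (simp add: has_field_derivative_def mult_commute_abs)
  ultimately have "\<phi> 1 - \<phi> 0 \<ge> (v \<bullet> (y - x)) * (1 - 0)"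
    by (intro convex_on_imp_above_tangent[where A=UNIV]) auto
  then show ?thesis unfolding \<phi>_def by simp
qed

lemma convex_on_decrease_le_norm_gradient:
  fixes f :: "'a::real_inner \<Rightarrow> real" and v :: 'a
  assumes "(f has_derivative (\<lambda>h. v \<bullet> h)) (at x)" and "convex_on UNIV f"
  shows "f x - f y \<le> norm v * dist x y"
proof -
  have "f x + v \<bullet> (y - x) \<le> f y"
    by (rule convex_on_gradient_inequality[OF assms])
  moreover have "\<bar>v \<bullet> (y - x)\<bar> \<le> norm v * norm (y - x)"
    by (rule Cauchy_Schwarz_ineq2)
  ultimately show ?thesis by (simp add: dist_norm norm_minus_commute)
qed

text \<open>With \<open>\<theta> = u / (s + u)\<close> one has \<open>\<theta> (1 - \<theta>) (s + u)\<^sup>2 = s u\<close>, and after taking logarithms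
  the lower bound on \<open>p\<close> leaves exactly \<open>(1 - \<theta>) ln q \<le> (1 - \<theta>) (- u\<^sup>2 / 2)\<close>.\<close>

lemma powr_interpolation_tail_bound:
  fixes p q s u \<theta> :: real
  assumes "0 < q" "0 < s" "0 < u" and p: "exp (- s\<^sup>2 / 2) \<le> p"
    and \<theta>: "\<theta> = u / (s + u)"
    and ineq: "p powr \<theta> * q powr (1 - \<theta>) \<le> exp (- (\<theta> * (1 - \<theta>) * (s + u)\<^sup>2) / 2)"
  shows "q \<le> exp (- u\<^sup>2 / 2)"
proof -
  have "0 < p" using p exp_gt_zero[of "- s\<^sup>2 / 2"] by linarith
  have "0 < s + u" using assms(2,3) by simp
  then have "1 - \<theta> = s / (s + u)" "0 < \<theta>" "0 < 1 - \<theta>"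
    unfolding \<theta> using assms(2,3) by (auto simp: field_simps)
  have "\<theta> * ln p + (1 - \<theta>) * ln q \<le> - (\<theta> * (1 - \<theta>) * (s + u)\<^sup>2) / 2"
    using ineq \<open>0 < p\<close> \<open>0 < q\<close> by (simp add: ln_mult ln_powr flip: ln_le_cancel_iff)
  moreover have "- s\<^sup>2 / 2 \<le> ln p"
    using p \<open>0 < p\<close> by (simp add: ln_ge_iff)
  then have "\<theta> * (- s\<^sup>2 / 2) \<le> \<theta> * ln p"
    using \<open>0 < \<theta>\<close> by (intro mult_left_mono) auto
  moreover have "\<theta> * (1 - \<theta>) * (s + u)\<^sup>2 = u * s"
    unfolding \<open>1 - \<theta> = s / (s + u)\<close> unfolding \<theta> using \<open>0 < s + u\<close> by (simp add: power2_eq_square)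
  moreover have "- (u * s) / 2 - \<theta> * (- s\<^sup>2 / 2) = (1 - \<theta>) * (- u\<^sup>2 / 2)"
    unfolding \<open>1 - \<theta> = s / (s + u)\<close> unfolding \<theta> using \<open>0 < s + u\<close>
    by (simp add: power2_eq_square divide_simps) (simp add: algebra_simps)
  ultimately have "(1 - \<theta>) * ln q \<le> (1 - \<theta>) * (- u\<^sup>2 / 2)"
    by linarith
  then have "ln q \<le> - u\<^sup>2 / 2"
    using \<open>0 < 1 - \<theta>\<close> by (rule mult_left_le_imp_le)
  then show ?thesis
    using \<open>0 < q\<close> by (metis exp_le_cancel_iff exp_ln)
qed

lemma lip_gauss_class_n_convex_level_sets:
  fixes N :: "(real^'n) measure" and f :: "real^'n \<Rightarrow> real" and grad :: "real^'n \<Rightarrow> real^'n"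
  assumes N: "N \<in> lip_gauss_class_n K" and "0 < K" "0 < b" "0 \<le> r" and \<theta>: "0 < \<theta>" "\<theta> < 1"
    and der: "\<And>x. (f has_derivative (\<lambda>h. grad x \<bullet> h)) (at x)"
    and "continuous_on UNIV grad" and convex: "convex_on UNIV f"
  shows "measure N {x. a \<le> f x \<and> norm (grad x) \<le> b} powr \<theta> * measure N {x. f x \<le> a - b * r} powr (1 - \<theta>)
      \<le> exp (- (\<theta> * (1 - \<theta>) * (r / K)\<^sup>2) / 2)"
proof -
  have [measurable]: "f \<in> borel_measurable borel" "grad \<in> borel_measurable borel"
    using der \<open>continuous_on UNIV grad\<close>
    by (auto intro!: borel_measurable_continuous_onI has_derivative_continuous_on)
  have "r \<le> dist x y" if "x \<in> {x. a \<le> f x \<and> norm (grad x) \<le> b}" "y \<in> {x. f x \<le> a - b * r}" for x y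
  proof -
    have "b * r \<le> norm (grad x) * dist x y"
      using convex_on_decrease_le_norm_gradient[OF der convex, of x y] that by simp
    also have "\<dots> \<le> b * dist x y"
      using that by (intro mult_right_mono) auto
    finally show ?thesis using \<open>0 < b\<close> by simp
  qed
  then show ?thesis
    using \<open>0 \<le> r\<close> by (intro lip_gauss_class_n_separated_sets[OF N \<open>0 < K\<close> \<theta>]) auto
qed

text \<open>If \<open>K = 0\<close> or \<open>t = 0\<close>, the right-hand side is \<open>exp 0 = 1\<close> (division by zero gives \<open>0\<close>),
  so the bound holds trivially.\<close>

lemma lip_gauss_class_n_convex_lower_deviation:
  fixes N :: "(real^'n) measure" and f :: "real^'n \<Rightarrow> real" and grad :: "real^'n \<Rightarrow> real^'n"
    and K a b t p :: real
  assumes N: "N \<in> lip_gauss_class_n K" and "0 < b" "0 \<le> t"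
    and der: "\<And>x. (f has_derivative (\<lambda>h. grad x \<bullet> h)) (at x)"
    and cont: "continuous_on UNIV grad" and convex: "convex_on UNIV f"
    and p: "p = measure N {x. a \<le> f x \<and> norm (grad x) \<le> b}" "0 < p"
  shows "measure N {x. f x \<le> a - K * b * sqrt (2 * ln (2 / p)) - t} \<le> exp (- t\<^sup>2 / (2 * b\<^sup>2 * K\<^sup>2))"
proof (cases "K = 0 \<or> t = 0")
  case True
  then show ?thesis using prob_space.prob_le_1[OF prob_space_lip_gauss_class_n[OF N]] by auto
next
  case False
  then have "0 < K" "0 < t" using lip_gauss_class_n_nonneg[OF N] \<open>0 \<le> t\<close> by auto
  define s where "s = sqrt (2 * ln (2 / p))"
  define q where "q = measure N {x. f x \<le> a - K * b * s - t}"
  define u where "u = t / (K * b)"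
  define \<theta> where "\<theta> = u / (s + u)"
  have "p \<le> 1" unfolding p using prob_space.prob_le_1[OF prob_space_lip_gauss_class_n[OF N]] .
  then have "0 < ln (2 / p)" using \<open>0 < p\<close> by simp
  then have "0 < s" and s_exp: "exp (- s\<^sup>2 / 2) \<le> p"
    using \<open>0 < p\<close> by (simp_all add: s_def exp_minus exp_ln field_simps)
  have "0 < u" unfolding u_def using \<open>0 < K\<close> \<open>0 < b\<close> \<open>0 < t\<close> by simp
  then have "0 < \<theta>" "\<theta> < 1" unfolding \<theta>_def using \<open>0 < s\<close> by (auto simp: field_simps)
  have level: "a - K * b * s - t = a - b * (K * (s + u))"
    unfolding u_def using \<open>0 < K\<close> \<open>0 < b\<close> by (simp add: field_simps)
  have "p powr \<theta> * q powr (1 - \<theta>) \<le> exp (- (\<theta> * (1 - \<theta>) * (K * (s + u) / K)\<^sup>2) / 2)"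
    unfolding p q_def level using \<open>0 < K\<close> \<open>0 < s\<close> \<open>0 < u\<close>
    by (intro lip_gauss_class_n_convex_level_sets[OF N \<open>0 < K\<close> \<open>0 < b\<close> _ \<open>0 < \<theta>\<close> \<open>\<theta> < 1\<close> der cont convex]) simp
  then have "p powr \<theta> * q powr (1 - \<theta>) \<le> exp (- (\<theta> * (1 - \<theta>) * (s + u)\<^sup>2) / 2)"
    using \<open>0 < K\<close> by simp
  then have "q \<le> exp (- u\<^sup>2 / 2)" if "0 < q"
    using powr_interpolation_tail_bound[OF that \<open>0 < s\<close> \<open>0 < u\<close> s_exp \<theta>_def] by simp
  then have "q \<le> exp (- u\<^sup>2 / 2)"
    by (cases "q = 0") (auto simp: q_def zero_less_measure_iff)
  also have "- u\<^sup>2 / 2 = - t\<^sup>2 / (2 * b\<^sup>2 * K\<^sup>2)"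
    unfolding u_def by (simp add: power_divide power_mult_distrib)
  finally show ?thesis unfolding q_def s_def .
qed

theorem proposition3p4:
  fixes M :: "'a measure" and X :: "'a \<Rightarrow> real^'n"
    and f :: "real^'n \<Rightarrow> real" and grad_f :: "real^'n \<Rightarrow> real^'n"
    and K a b t :: real
  assumes "prob_space M"
    and "X \<in> borel_measurable M"
    and "distr M borel X \<in> lip_gauss_class_n K"
    and "\<And>x. (f has_derivative (\<lambda>h. grad_f x \<bullet> h)) (at x)"
    and "continuous_on UNIV grad_f"
    and "convex_on UNIV f"
    and "b > 0"
    and "t \<ge> 0"
    and "measure M {\<omega>\<in>space M. f (X \<omega>) \<ge> a \<and> norm (grad_f (X \<omega>)) \<le> b} > 0"
  shows "let p = measure M {\<omega>\<in>space M. f (X \<omega>) \<ge> a \<and> norm (grad_f (X \<omega>)) \<le> b}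
         in measure M {\<omega>\<in>space M. f (X \<omega>) \<le> a - K * b * sqrt (2 * ln (2 / p)) - t}
            \<le> 2 * exp (- t\<^sup>2 / (2 * b\<^sup>2 * K\<^sup>2))"
proof -
  have [measurable]: "f \<in> borel_measurable borel" "grad_f \<in> borel_measurable borel"
    using assms(4,5) by (auto intro!: borel_measurable_continuous_onI has_derivative_continuous_on)
  have law: "measure M {\<omega>\<in>space M. P (X \<omega>)} = measure (distr M borel X) {x. P x}"
    if "{x. P x} \<in> sets borel" for P
    using that assms(2) by (simp add: measure_distr vimage_def Int_def conj_commute)
  define p where "p = measure M {\<omega>\<in>space M. f (X \<omega>) \<ge> a \<and> norm (grad_f (X \<omega>)) \<le> b}"
  have p_law: "p = measure (distr M borel X) {x. a \<le> f x \<and> norm (grad_f x) \<le> b}"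
    unfolding p_def by (rule law) measurable
  have "measure M {\<omega>\<in>space M. f (X \<omega>) \<le> a - K * b * sqrt (2 * ln (2 / p)) - t}
      = measure (distr M borel X) {x. f x \<le> a - K * b * sqrt (2 * ln (2 / p)) - t}"
    by (rule law) measurable
  also have "\<dots> \<le> exp (- t\<^sup>2 / (2 * b\<^sup>2 * K\<^sup>2))"
    using assms(9) unfolding p_def[symmetric]
    by (rule lip_gauss_class_n_convex_lower_deviation[OF assms(3) assms(7,8) assms(4-6) p_law])
  also have "\<dots> \<le> 2 * exp (- t\<^sup>2 / (2 * b\<^sup>2 * K\<^sup>2))"
    by simp
  finally show ?thesis unfolding Let_def p_def .
qed

end
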